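(* Let $n \ge 2$ and let $\mathcal{A}$ be a non-degenerate deformation of the type $A_{n-1}$ Coxeter arrangement in $\mathbb{R}^n$. Let $H_0 \in \mathcal{A}$, say $H_0 : x_k - x_l = a$ with $k<l$. Then the restriction $\mathcal{A}^{H_0}$, viewed in $\mathbb{R}^{n-1}$ via the isomorphism $H_0 \to \mathbb{R}^{n-1}$ that deletes the coordinate $x_l$, is a non-degenerate deformation of the type $A_{n-2}$ Coxeter arrangement in $\mathbb{R}^{n-1}$.
   Context: A non-degenerate deformation of the type $A_{n-1}$ Coxeter arrangement in $\mathbb{R}^n$ is a finite hyperplane arrangement of the form $\{x_i-x_j = a_{ij}^{(1)},\ldots,a_{ij}^{(t_{ij})}\ |\ 1\le i \ne j \le n\}$ with all $a_{ij}^{(s)}\in\mathbb{R}$ and $t_{ij}\ge 1$, i.e. every hyperplane is parallel to some $x_i-x_j=0$ and for every pair $i\ne j$ there is at least one hyperplane of the form $x_i - x_j = c$. For $H_0 \in \mathcal{A}$, the restriction is the arrangement $\mathcal{A}^{H_0} = \{H_0 \cap H : H \in \mathcal{A}\setminus\{H_0\},\ H_0\cap H \neq \emptyset\}$ in the affine space $H_0$. *)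

theory Defs
  imports Complex_Main
begin

text \<open>Points of R^n are modelled as functions nat => real vanishing at all
 indices >= n (coordinates are indexed 0..n-1 instead of 1..n).\<close>

definition Rn :: "nat \<Rightarrow> (nat \<Rightarrow> real) set" where
  "Rn n = {x. \<forall>i\<ge>n. x i = 0}"

definition hyp :: "nat \<Rightarrow> nat \<Rightarrow> nat \<Rightarrow> real \<Rightarrow> (nat \<Rightarrow> real) set" where
  "hyp n i j c = {x \<in> Rn n. x i - x j = c}"

definition nondeg_deformation :: "nat \<Rightarrow> (nat \<Rightarrow> real) set set \<Rightarrow> bool" where
  "nondeg_deformation n A \<longleftrightarrow>
     finite A \<and>
     (\<forall>H\<in>A. \<exists>i j c. i < n \<and> j < n \<and> i \<noteq> j \<and> H = hyp n i j c) \<and>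
     (\<forall>i j. i < n \<longrightarrow> j < n \<longrightarrow> i \<noteq> j \<longrightarrow> (\<exists>c. hyp n i j c \<in> A))"

definition restriction :: "'a set set \<Rightarrow> 'a set \<Rightarrow> 'a set set" where
  "restriction A H0 = {H0 \<inter> H | H. H \<in> A - {H0} \<and> H0 \<inter> H \<noteq> {}}"

definition del_coord :: "nat \<Rightarrow> (nat \<Rightarrow> real) \<Rightarrow> (nat \<Rightarrow> real)" where
  "del_coord l x = (\<lambda>i. if i < l then x i else x (Suc i))"

end

theory Submission
  imports Defs
begin

text \<open>On H0: x_k - x_l = a the coordinate x_l equals x_k - a, so deleting it is a bijection
 from H0 onto R^(n-1), inverted by reinserting x_k - a. Under this identification a hyperplane
 x_i - x_j = c cuts out x'_(\<sigma> i) - x'_(\<sigma> j) = c', where \<sigma> = collapse_index k l sends l to k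
 and shifts the indices above l down by one, and c' differs from c by \<plusminus>a. Pairs with
 \<sigma> i = \<sigma> j are {k, l}; their hyperplanes are parallel to H0 and contribute nothing to the
 restriction. Every pair of distinct indices below n - 1 is \<sigma> of a pair of distinct indices,
 and the corresponding hyperplanes meet H0 properly.\<close>

definition collapse_index :: "nat \<Rightarrow> nat \<Rightarrow> nat \<Rightarrow> nat" where
  "collapse_index k l m = (if m < l then m else if m = l then k else m - 1)"

definition lift_to_hyp :: "nat \<Rightarrow> nat \<Rightarrow> real \<Rightarrow> (nat \<Rightarrow> real) \<Rightarrow> (nat \<Rightarrow> real)" where
  "lift_to_hyp k l a y = (\<lambda>m. if m < l then y m else if m = l then y k - a else y (m - 1))"

lemma collapse_index_less:
  "k < l \<Longrightarrow> l < n \<Longrightarrow> m < n \<Longrightarrow> collapse_index k l m < n - 1"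
  by (auto simp: collapse_index_def)

lemma collapse_index_right_inverse:
  "collapse_index k l (if m < l then m else Suc m) = m"
  by (simp add: collapse_index_def)

lemma collapse_index_eq_cases:
  "k < l \<Longrightarrow> i \<noteq> j \<Longrightarrow> collapse_index k l i = collapse_index k l j \<Longrightarrow>
   (i = k \<and> j = l) \<or> (i = l \<and> j = k)"
  by (auto simp: collapse_index_def split: if_splits)

lemma del_coord_lift_to_hyp: "k < l \<Longrightarrow> del_coord l (lift_to_hyp k l a y) = y"
  by (rule ext) (auto simp: del_coord_def lift_to_hyp_def)

lemma lift_to_hyp_apply:
  "k < l \<Longrightarrow> lift_to_hyp k l a y m = y (collapse_index k l m) - (if m = l then a else 0)"
  by (auto simp: collapse_index_def lift_to_hyp_def)

lemma lift_to_hyp_in_hyp: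
  "k < l \<Longrightarrow> l < n \<Longrightarrow> y \<in> Rn (n - 1) \<Longrightarrow> lift_to_hyp k l a y \<in> hyp n k l a"
  by (auto simp: Rn_def hyp_def lift_to_hyp_def)

lemma del_coord_in_Rn: "l < n \<Longrightarrow> x \<in> Rn n \<Longrightarrow> del_coord l x \<in> Rn (n - 1)"
  by (auto simp: Rn_def del_coord_def)

lemma hyp_apply_via_del_coord:
  "k < l \<Longrightarrow> x \<in> hyp n k l a \<Longrightarrow>
   x m = del_coord l x (collapse_index k l m) - (if m = l then a else 0)"
  by (auto simp: hyp_def collapse_index_def del_coord_def)

lemma del_coord_image_hyp:
  assumes "k < l" "l < n"
  shows "del_coord l ` hyp n k l a = Rn (n - 1)"
proof
  show "del_coord l ` hyp n k l a \<subseteq> Rn (n - 1)"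
    using del_coord_in_Rn[OF assms(2)] by (auto simp: hyp_def)
  show "Rn (n - 1) \<subseteq> del_coord l ` hyp n k l a"
    using lift_to_hyp_in_hyp[OF assms] del_coord_lift_to_hyp[OF assms(1)] by (metis image_eqI subsetI)
qed

lemma del_coord_image_hyp_Int_hyp:
  assumes "k < l" "l < n"
  shows "del_coord l ` (hyp n k l a \<inter> hyp n i j c) =
    hyp (n - 1) (collapse_index k l i) (collapse_index k l j)
      (c + (if i = l then a else 0) - (if j = l then a else 0))"
    (is "_ = ?H'")
proof
  show "del_coord l ` (hyp n k l a \<inter> hyp n i j c) \<subseteq> ?H'"
  proof
    fix y assume "y \<in> del_coord l ` (hyp n k l a \<inter> hyp n i j c)"
    then obtain x where x: "x \<in> hyp n k l a" "x \<in> hyp n i j c" and y: "y = del_coord l x"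
      by auto
    have "y \<in> Rn (n - 1)" using del_coord_in_Rn[OF assms(2)] x y by (auto simp: hyp_def)
    moreover have "x i - x j = c" using x by (auto simp: hyp_def)
    ultimately show "y \<in> ?H'"
      using hyp_apply_via_del_coord[OF assms(1) x(1), of i]
        hyp_apply_via_del_coord[OF assms(1) x(1), of j] y
      by (auto simp: hyp_def split: if_splits)
  qed
  show "?H' \<subseteq> del_coord l ` (hyp n k l a \<inter> hyp n i j c)"
  proof
    fix y assume y: "y \<in> ?H'"
    then have "lift_to_hyp k l a y \<in> hyp n k l a"
      using lift_to_hyp_in_hyp[OF assms] by (auto simp: hyp_def)
    moreover have "lift_to_hyp k l a y \<in> hyp n i j c"
      using y calculation lift_to_hyp_apply[OF assms(1), of a y i]
        lift_to_hyp_apply[OF assms(1), of a y j]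
      by (auto simp: hyp_def split: if_splits)
    ultimately show "y \<in> del_coord l ` (hyp n k l a \<inter> hyp n i j c)"
      using del_coord_lift_to_hyp[OF assms(1)] by (metis IntI image_eqI)
  qed
qed

lemma hyp_nonempty: "i < n \<Longrightarrow> i \<noteq> j \<Longrightarrow> hyp n i j c \<noteq> {}"
  by (auto simp: hyp_def Rn_def intro!: exI[of _ "\<lambda>m. if m = i then c else 0"])

lemma hyp_neq_Rn: "i < n \<Longrightarrow> i \<noteq> j \<Longrightarrow> hyp n i j c \<noteq> Rn n"
proof
  assume "i < n" "i \<noteq> j" "hyp n i j c = Rn n"
  moreover have "(\<lambda>m. if m = i then c + 1 else 0) \<in> Rn n" using \<open>i < n\<close> by (simp add: Rn_def)
  ultimately have "(\<lambda>m. if m = i then c + 1 else 0) \<in> hyp n i j c" by simp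
  then show False using \<open>i \<noteq> j\<close> by (simp add: hyp_def)
qed

lemma hyp_parallel_meeting_eq:
  assumes "(i = k \<and> j = l) \<or> (i = l \<and> j = k)" "hyp n k l a \<inter> hyp n i j c \<noteq> {}"
  shows "hyp n i j c = hyp n k l a"
proof -
  obtain x where "x \<in> hyp n k l a" "x \<in> hyp n i j c" using assms(2) by auto
  then have "x k - x l = a" "x i - x j = c" by (auto simp: hyp_def)
  then show ?thesis using assms(1) by (auto simp: hyp_def)
qed

lemma restriction_hyp_form:
  assumes "nondeg_deformation n A" "k < l" "l < n"
    and "G \<in> (\<lambda>S. del_coord l ` S) ` restriction A (hyp n k l a)"
  shows "\<exists>i j c. i < n - 1 \<and> j < n - 1 \<and> i \<noteq> j \<and> G = hyp (n - 1) i j c"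
proof -
  obtain H where H: "H \<in> A" "H \<noteq> hyp n k l a" "hyp n k l a \<inter> H \<noteq> {}"
    and G: "G = del_coord l ` (hyp n k l a \<inter> H)"
    using assms(4) unfolding restriction_def by auto
  obtain i j c where ij: "i < n" "j < n" "i \<noteq> j" and Hij: "H = hyp n i j c"
    using assms(1) H(1) unfolding nondeg_deformation_def by meson
  have "collapse_index k l i \<noteq> collapse_index k l j"
  proof
    assume "collapse_index k l i = collapse_index k l j"
    then have "hyp n i j c = hyp n k l a"
      using collapse_index_eq_cases[OF assms(2) ij(3)] hyp_parallel_meeting_eq H(3) Hij
      by blast
    then show False using H(2) Hij by simp
  qed
  moreover have "G = hyp (n - 1) (collapse_index k l i) (collapse_index k l j)
      (c + (if i = l then a else 0) - (if j = l then a else 0))"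
    using del_coord_image_hyp_Int_hyp[OF assms(2,3)] G Hij by simp
  ultimately show ?thesis
    using collapse_index_less[OF assms(2,3) ij(1)] collapse_index_less[OF assms(2,3) ij(2)]
    by blast
qed

lemma restriction_covers_pairs:
  assumes "nondeg_deformation n A" "k < l" "l < n"
    and ij': "i' < n - 1" "j' < n - 1" "i' \<noteq> j'"
  shows "\<exists>c'. hyp (n - 1) i' j' c' \<in> (\<lambda>S. del_coord l ` S) ` restriction A (hyp n k l a)"
proof -
  define i where "i = (if i' < l then i' else Suc i')"
  define j where "j = (if j' < l then j' else Suc j')"
  have "i < n" "j < n" "i \<noteq> j" using ij' assms(3) by (auto simp: i_def j_def)
  then obtain c where c: "hyp n i j c \<in> A"
    using assms(1) unfolding nondeg_deformation_def by meson
  define c' where "c' = c + (if i = l then a else 0) - (if j = l then a else 0)"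
  have image: "del_coord l ` (hyp n k l a \<inter> hyp n i j c) = hyp (n - 1) i' j' c'"
    using del_coord_image_hyp_Int_hyp[OF assms(2,3), of a i j c] collapse_index_right_inverse
    unfolding i_def j_def c'_def by simp
  then have "hyp n k l a \<inter> hyp n i j c \<noteq> {}"
    using hyp_nonempty[OF ij'(1,3), of c'] by force
  moreover have "hyp n i j c \<noteq> hyp n k l a"
  proof
    assume "hyp n i j c = hyp n k l a"
    then have "hyp (n - 1) i' j' c' = Rn (n - 1)"
      using image del_coord_image_hyp[OF assms(2,3), of a] by simp
    then show False using hyp_neq_Rn[OF ij'(1,3)] by blast
  qed
  ultimately have "hyp n k l a \<inter> hyp n i j c \<in> restriction A (hyp n k l a)"
    unfolding restriction_def using c by blast
  then show ?thesis using image by (metis image_eqI)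
qed

theorem lemma3p1:
  fixes n k l :: nat and a :: real and A :: "(nat \<Rightarrow> real) set set"
  assumes "n \<ge> 2"
    and "nondeg_deformation n A"
    and "k < l" and "l < n"
    and "hyp n k l a \<in> A"
  shows "nondeg_deformation (n - 1)
           ((\<lambda>S. del_coord l ` S) ` restriction A (hyp n k l a))"
proof -
  have "finite (restriction A (hyp n k l a))"
    using assms(2) unfolding nondeg_deformation_def restriction_def by auto
  then show ?thesis
    unfolding nondeg_deformation_def
    using restriction_hyp_form[OF assms(2-4)] restriction_covers_pairs[OF assms(2-4)]
    by blast
qed

end
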